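(* The graph $K_{15}-6K_2$ has a triangular embedding in an orientable surface; in particular its orientable genus equals $10$.
   Context: $K_{15}-6K_2$ is the complete graph on 15 vertices with the 6 edges of a matching removed. An embedding is triangular if it is cellular and every face is bounded by a closed walk of length 3. *)

theory Defs
  imports "HOL-Combinatorics.Permutations"
begin

text \<open>Orientable cellular embeddings of a connected graph are represented combinatorially by
  rotation systems (Heffter--Edmonds--Youngs): at every vertex a cyclic permutation of
  its neighbours.  The faces of the embedding are the orbits of the face-tracing
  permutation on darts (directed edges).\<close>

definition simple_graph :: "'a set \<Rightarrow> ('a \<Rightarrow> 'a \<Rightarrow> bool) \<Rightarrow> bool" where
  "simple_graph V E \<longleftrightarrow> finite V \<and> (\<forall>u v. E u v \<longrightarrow> u \<in> V \<and> v \<in> V \<and> u \<noteq> v \<and> E v u)"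

definition neighbours :: "'a set \<Rightarrow> ('a \<Rightarrow> 'a \<Rightarrow> bool) \<Rightarrow> 'a \<Rightarrow> 'a set" where
  "neighbours V E v = {u \<in> V. E v u}"

definition darts :: "'a set \<Rightarrow> ('a \<Rightarrow> 'a \<Rightarrow> bool) \<Rightarrow> ('a \<times> 'a) set" where
  "darts V E = {(u, v). u \<in> V \<and> v \<in> V \<and> E u v}"

definition num_edges :: "'a set \<Rightarrow> ('a \<Rightarrow> 'a \<Rightarrow> bool) \<Rightarrow> nat" where
  "num_edges V E = card {{u, v} | u v. u \<in> V \<and> v \<in> V \<and> E u v}"

definition rotation_system :: "'a set \<Rightarrow> ('a \<Rightarrow> 'a \<Rightarrow> bool) \<Rightarrow> ('a \<Rightarrow> 'a \<Rightarrow> 'a) \<Rightarrow> bool" where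
  "rotation_system V E rot \<longleftrightarrow>
     (\<forall>v\<in>V. rot v permutes neighbours V E v \<and>
        (\<forall>u\<in>neighbours V E v. \<forall>w\<in>neighbours V E v. \<exists>k::nat. (rot v ^^ k) u = w))"

definition face_succ :: "('a \<Rightarrow> 'a \<Rightarrow> 'a) \<Rightarrow> 'a \<times> 'a \<Rightarrow> 'a \<times> 'a" where
  "face_succ rot d = (snd d, rot (snd d) (fst d))"

definition face_of :: "('a \<Rightarrow> 'a \<Rightarrow> 'a) \<Rightarrow> 'a \<times> 'a \<Rightarrow> ('a \<times> 'a) set" where
  "face_of rot d = {(face_succ rot ^^ k) d | k. True}"

definition faces :: "'a set \<Rightarrow> ('a \<Rightarrow> 'a \<Rightarrow> bool) \<Rightarrow> ('a \<Rightarrow> 'a \<Rightarrow> 'a) \<Rightarrow> ('a \<times> 'a) set set" where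
  "faces V E rot = face_of rot ` darts V E"

text \<open>Genus of the orientable surface of the embedding given by a rotation system
  (Euler: V - E + F = 2 - 2g).\<close>
definition embedding_genus :: "'a set \<Rightarrow> ('a \<Rightarrow> 'a \<Rightarrow> bool) \<Rightarrow> ('a \<Rightarrow> 'a \<Rightarrow> 'a) \<Rightarrow> int" where
  "embedding_genus V E rot =
     (2 - int (card V) + int (num_edges V E) - int (card (faces V E rot))) div 2"

definition triangular :: "'a set \<Rightarrow> ('a \<Rightarrow> 'a \<Rightarrow> bool) \<Rightarrow> ('a \<Rightarrow> 'a \<Rightarrow> 'a) \<Rightarrow> bool" where
  "triangular V E rot \<longleftrightarrow> (\<forall>F\<in>faces V E rot. card F = 3)"

definition orientable_genus :: "'a set \<Rightarrow> ('a \<Rightarrow> 'a \<Rightarrow> bool) \<Rightarrow> nat" where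
  "orientable_genus V E =
     (LEAST g::nat. \<exists>rot. rotation_system V E rot \<and> embedding_genus V E rot = int g)"

text \<open>K_15 minus a perfect-ish matching of 6 edges {0,1},{2,3},...,{10,11}.\<close>
definition K15_V :: "nat set" where
  "K15_V = {0..<15}"

definition K15_minus_6K2 :: "nat \<Rightarrow> nat \<Rightarrow> bool" where
  "K15_minus_6K2 u v \<longleftrightarrow> u < 15 \<and> v < 15 \<and> u \<noteq> v \<and>
      \<not> (u < 12 \<and> v < 12 \<and> u div 2 = v div 2)"

end

theory Submission
  imports Defs "HOL-Combinatorics.Orbits" "HOL-Combinatorics.Cycles"
begin

text \<open>In an orientable embedding of a simple graph without vertices of degree one every face
  traces at least three darts, so 3F \<le> 2E; by Euler's formula V - E + F = 2 - 2g the genus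
  is therefore smallest for a triangular embedding, where 3F = 2E.  The graph K15 - 6K2 has
  E = 99, and an explicit rotation system all of whose faces are triangles gives F = 66 and
  genus (2 - 15 + 99 - 66) / 2 = 10.  Its faces are triangles because, checked by evaluation,
  whenever w follows u around v, also u follows v around w and v follows w around u.\<close>

lemma finite_darts: "simple_graph V E \<Longrightarrow> finite (darts V E)"
  unfolding simple_graph_def darts_def by (rule finite_subset[of _ "V \<times> V"]) auto

lemma card_darts_eq_sum_degrees:
  assumes "simple_graph V E"
  shows "card (darts V E) = (\<Sum>v\<in>V. card (neighbours V E v))"
proof -
  have "darts V E = (\<lambda>(v, u). (u, v)) ` Sigma V (neighbours V E)"
    using assms by (force simp: darts_def neighbours_def simple_graph_def)
  moreover have "inj_on (\<lambda>(v, u). (u, v)) (Sigma V (neighbours V E))"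
    by (auto simp: inj_on_def)
  moreover have "finite V" "\<And>v. finite (neighbours V E v)"
    using assms by (auto simp: simple_graph_def neighbours_def)
  ultimately show ?thesis by (simp add: card_image card_SigmaI)
qed

lemma card_darts_eq_twice_num_edges:
  assumes "simple_graph V E"
  shows "card (darts V E) = 2 * num_edges V E"
proof -
  let ?edge = "\<lambda>(u, v). {u, v} :: 'a set"
  have edges: "{{u, v} | u v. u \<in> V \<and> v \<in> V \<and> E u v} = ?edge ` darts V E"
    by (auto simp: darts_def)
  have fibre: "card {d \<in> darts V E. ?edge d = e} = 2" if e: "e \<in> ?edge ` darts V E" for e
  proof -
    obtain u v where uv: "(u, v) \<in> darts V E" "e = {u, v}" using e by fast
    then have "u \<noteq> v" "(v, u) \<in> darts V E"
      using assms by (auto simp: darts_def simple_graph_def)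
    moreover have "{d \<in> darts V E. ?edge d = e} = {(u, v), (v, u)}"
      using uv calculation by (auto simp: doubleton_eq_iff)
    ultimately show ?thesis by simp
  qed
  have "card (darts V E) = (\<Sum>e\<in>?edge ` darts V E. card {d \<in> darts V E. ?edge d = e})"
    unfolding card_eq_sum by (rule sum.image_gen[OF finite_darts[OF assms]])
  also have "\<dots> = 2 * num_edges V E"
    using fibre by (simp add: num_edges_def edges)
  finally show ?thesis .
qed

lemma face_succ_in_darts:
  assumes "simple_graph V E" "rotation_system V E rot" "d \<in> darts V E"
  shows "face_succ rot d \<in> darts V E"
proof -
  obtain u v where uv: "d = (u, v)" "v \<in> V" "u \<in> neighbours V E v"
    using assms(1,3) by (auto simp: darts_def neighbours_def simple_graph_def)
  moreover have "rot v permutes neighbours V E v"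
    using assms(2) uv(2) by (simp add: rotation_system_def)
  ultimately have "rot v u \<in> neighbours V E v" by (simp add: permutes_in_image)
  then show ?thesis using uv by (simp add: face_succ_def darts_def neighbours_def)
qed

lemma inj_on_face_succ:
  assumes "rotation_system V E rot"
  shows "inj_on (face_succ rot) (darts V E)"
proof (rule inj_onI)
  fix d d' assume d: "d \<in> darts V E" and "d' \<in> darts V E"
    and "face_succ rot d = face_succ rot d'"
  then have "snd d = snd d'" "rot (snd d) (fst d) = rot (snd d) (fst d')"
    by (auto simp: face_succ_def)
  moreover have "inj (rot (snd d))"
    using assms d by (auto simp: rotation_system_def darts_def intro: permutes_inj)
  ultimately show "d = d'" by (simp add: inj_eq prod_eq_iff)
qed

lemma face_perm_permutes:
  assumes "simple_graph V E" "rotation_system V E rot"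
  shows "perm_restrict (face_succ rot) (darts V E) permutes darts V E"
proof (rule bij_imp_permutes)
  have "face_succ rot ` darts V E = darts V E"
    using assms by (intro endo_inj_surj finite_darts inj_on_face_succ) (auto intro: face_succ_in_darts)
  then show "bij_betw (perm_restrict (face_succ rot) (darts V E)) (darts V E) (darts V E)"
    using inj_on_face_succ[OF assms(2)]
    by (simp add: bij_betw_def perm_restrict_simps cong: inj_on_cong image_cong)
qed (simp add: perm_restrict_simps)

lemma face_of_eq_orbit:
  assumes "simple_graph V E" "rotation_system V E rot" "d \<in> darts V E"
  shows "face_of rot d = orbit (perm_restrict (face_succ rot) (darts V E)) d"
proof -
  let ?p = "perm_restrict (face_succ rot) (darts V E)"
  have perm: "permutation ?p"
    using face_perm_permutes[OF assms(1,2)] finite_darts[OF assms(1)] by (auto simp: permutation_permutes)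
  have "(?p ^^ n) d = (face_succ rot ^^ n) d \<and> (face_succ rot ^^ n) d \<in> darts V E" for n
    by (induction n) (auto simp: perm_restrict_simps assms intro: face_succ_in_darts)
  then show ?thesis
    by (simp add: face_of_def orbit_altdef_permutation[OF perm])
qed

lemma sum_card_faces:
  assumes "simple_graph V E" "rotation_system V E rot"
  shows "(\<Sum>F\<in>faces V E rot. card F) = card (darts V E)"
proof -
  let ?p = "perm_restrict (face_succ rot) (darts V E)"
  have perm: "?p permutes darts V E" and fin: "finite (darts V E)"
    using face_perm_permutes[OF assms] finite_darts[OF assms(1)] .
  have faces: "faces V E rot = orbit ?p ` darts V E"
    using face_of_eq_orbit[OF assms] by (simp add: faces_def)
  have "permutation ?p" using perm fin by (auto simp: permutation_permutes)
  then have "d \<in> orbit ?p d" for d by (rule permutation_self_in_orbit)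
  then have "\<Union>(faces V E rot) = darts V E"
    using permutes_orbit_subset[OF perm] unfolding faces by blast
  moreover have "pairwise disjnt (faces V E rot)"
  proof (rule pairwiseI)
    fix A B assume "A \<in> faces V E rot" "B \<in> faces V E rot" "A \<noteq> B"
    then obtain a b where "A = orbit ?p a" "B = orbit ?p b" by (auto simp: faces)
    moreover have "orbit ?p e = orbit ?p x" if "e \<in> orbit ?p x" for e x
      using orbit_cyclic_eq3[OF cyclic_on_orbit[OF perm fin] that] .
    ultimately show "disjnt A B" using \<open>A \<noteq> B\<close> by (metis disjnt_iff)
  qed
  moreover have "finite F" if "F \<in> faces V E rot" for F
    using that permutes_orbit_subset[OF perm] fin by (auto simp: faces intro: finite_subset)
  ultimately show ?thesis by (metis card_Union_disjoint)
qed

lemma rotation_fixed_point_imp_degree_one: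
  assumes "rotation_system V E rot" "v \<in> V" "u \<in> neighbours V E v" "rot v u = u"
  shows "neighbours V E v = {u}"
proof -
  have "(rot v ^^ k) u = u" for k by (induction k) (simp_all add: assms(4))
  then show ?thesis using assms(1-3) by (fastforce simp: rotation_system_def)
qed

lemma card_face_of_ge_3:
  assumes "simple_graph V E" "rotation_system V E rot"
    and no_leaf: "\<And>v. v \<in> V \<Longrightarrow> card (neighbours V E v) \<noteq> 1"
    and "d \<in> darts V E"
  shows "3 \<le> card (face_of rot d)"
proof -
  let ?f = "face_succ rot"
  have loopless: "fst x \<noteq> snd x" if "x \<in> darts V E" for x
    using that assms(1) by (auto simp: darts_def simple_graph_def)
  have d1: "?f d \<in> darts V E" using face_succ_in_darts assms(1,2,4) .
  obtain u v where uv: "d = (u, v)" "v \<in> V" "u \<in> neighbours V E v"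
    using assms(1,4) by (auto simp: darts_def neighbours_def simple_graph_def)
  have "d \<noteq> ?f (?f d)"
  proof
    assume "d = ?f (?f d)"
    then have "rot v u = u" using uv(1) by (simp add: face_succ_def)
    then show False
      using rotation_fixed_point_imp_degree_one[OF assms(2) uv(2,3)] no_leaf[OF uv(2)] by simp
  qed
  moreover have "d \<noteq> ?f d" "?f d \<noteq> ?f (?f d)"
    using loopless[OF assms(4)] loopless[OF d1] uv(1) by (auto simp: face_succ_def)
  moreover have "{d, ?f d, ?f (?f d)} \<subseteq> face_of rot d"
    unfolding face_of_def by (auto intro: exI[of _ 0] exI[of _ 1] exI[of _ 2] simp: numeral_2_eq_2)
  moreover have "finite (face_of rot d)"
    using face_of_eq_orbit[OF assms(1,2,4)] face_perm_permutes[OF assms(1,2)] finite_darts[OF assms(1)]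
    by (metis finite_subset permutes_orbit_subset assms(4))
  ultimately show ?thesis by (metis card_mono card_3_iff)
qed

lemma three_faces_le_twice_edges:
  assumes "simple_graph V E" "rotation_system V E rot"
    and "\<And>v. v \<in> V \<Longrightarrow> card (neighbours V E v) \<noteq> 1"
  shows "3 * card (faces V E rot) \<le> 2 * num_edges V E"
proof -
  have "3 * card (faces V E rot) = (\<Sum>F\<in>faces V E rot. 3)" by simp
  also have "\<dots> \<le> (\<Sum>F\<in>faces V E rot. card F)"
    using card_face_of_ge_3[OF assms] by (intro sum_mono) (auto simp: faces_def)
  finally show ?thesis
    by (simp add: sum_card_faces card_darts_eq_twice_num_edges assms)
qed

lemma three_faces_eq_twice_edges_if_triangular:
  assumes "simple_graph V E" "rotation_system V E rot" "triangular V E rot"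
  shows "3 * card (faces V E rot) = 2 * num_edges V E"
  using sum_card_faces[OF assms(1,2)] assms(3)
  by (simp add: triangular_def card_darts_eq_twice_num_edges[OF assms(1)])

lemma triangular_if_face_succ_cube_id:
  assumes "simple_graph V E" "rotation_system V E rot"
    and "\<And>v. v \<in> V \<Longrightarrow> card (neighbours V E v) \<noteq> 1"
    and cube: "\<And>d. d \<in> darts V E \<Longrightarrow> (face_succ rot ^^ 3) d = d"
  shows "triangular V E rot"
  unfolding triangular_def faces_def
proof
  fix F assume "F \<in> face_of rot ` darts V E"
  then obtain d where d: "d \<in> darts V E" and F: "F = face_of rot d" by blast
  let ?f = "face_succ rot"
  have "F \<subseteq> {d, ?f d, ?f (?f d)}"
  proof
    fix x assume "x \<in> F"
    then obtain k where "x = (?f ^^ (k mod 3)) d"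
      using funpow_mod_eq[of 3 ?f d] cube[OF d] by (auto simp: F face_of_def)
    moreover have "k mod 3 \<in> {0, 1, 2}" by auto
    ultimately show "x \<in> {d, ?f d, ?f (?f d)}" by (auto simp: numeral_2_eq_2)
  qed
  then have "card F \<le> card {d, ?f d, ?f (?f d)}" by (rule card_mono[rotated]) simp
  also have "\<dots> \<le> 3" by (simp add: card_insert_le_m1)
  finally have "card F \<le> 3" .
  then show "card F = 3" using card_face_of_ge_3[OF assms(1-3) d] F by simp
qed

lemma orientable_genus_eq_if_triangular:
  assumes "simple_graph V E" "\<And>v. v \<in> V \<Longrightarrow> card (neighbours V E v) \<noteq> 1"
    and rot: "rotation_system V E rot" "triangular V E rot"
    and "embedding_genus V E rot = int g"
  shows "orientable_genus V E = g"
  unfolding orientable_genus_def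
proof (rule Least_equality)
  show "\<exists>rot. rotation_system V E rot \<and> embedding_genus V E rot = int g"
    using rot assms(5) by blast
next
  fix g' assume "\<exists>rot'. rotation_system V E rot' \<and> embedding_genus V E rot' = int g'"
  then obtain rot' where rot': "rotation_system V E rot'" "embedding_genus V E rot' = int g'" by blast
  have "card (faces V E rot') \<le> card (faces V E rot)"
    using three_faces_le_twice_edges[OF assms(1) rot'(1) assms(2)]
      three_faces_eq_twice_edges_if_triangular[OF assms(1) rot] by simp
  then have "embedding_genus V E rot \<le> embedding_genus V E rot'"
    unfolding embedding_genus_def by (intro zdiv_mono1) simp_all
  then show "g \<le> g'" using assms(5) rot'(2) by simp
qed

lemma cycle_of_list_funpow_nth:
  assumes "distinct cs" "i < length cs"
  shows "(cycle_of_list cs ^^ n) (cs ! i) = cs ! ((n + i) mod length cs)"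
  using arg_cong[OF cyclic_rotation[OF assms(1), of n], of "\<lambda>xs. xs ! i"] assms(2)
  by (simp add: nth_rotate)

lemma rotation_system_of_cycles:
  assumes "\<And>v. v \<in> V \<Longrightarrow> distinct (cs v) \<and> set (cs v) = neighbours V E v"
  shows "rotation_system V E (\<lambda>v. cycle_of_list (cs v))"
  unfolding rotation_system_def
proof (intro ballI conjI)
  fix v u w assume v: "v \<in> V" and "u \<in> neighbours V E v" "w \<in> neighbours V E v"
  then obtain i j where ij: "i < length (cs v)" "u = cs v ! i" "j < length (cs v)" "w = cs v ! j"
    using assms by (metis in_set_conv_nth)
  have "(cycle_of_list (cs v) ^^ (length (cs v) - i + j)) u = w"
    using ij assms[OF v] by (simp add: cycle_of_list_funpow_nth)
  then show "\<exists>k. (cycle_of_list (cs v) ^^ k) u = w" ..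
next
  fix v assume "v \<in> V"
  then show "cycle_of_list (cs v) permutes neighbours V E v"
    using assms cycle_permutes by metis
qed

definition cyclic_successions :: "'a list \<Rightarrow> ('a \<times> 'a) set" where
  "cyclic_successions cs = set (zip cs (rotate1 cs))"

lemma in_cyclic_successions_iff:
  assumes "distinct cs"
  shows "(x, y) \<in> cyclic_successions cs \<longleftrightarrow> x \<in> set cs \<and> cycle_of_list cs x = y"
proof -
  have "rotate1 cs = map (cycle_of_list cs) cs"
    using cyclic_rotation[OF assms, of 1] by simp
  then show ?thesis by (auto simp: cyclic_successions_def zip_map2 zip_same_conv_map)
qed

definition K15_rotation_lists :: "nat \<Rightarrow> nat list" where
  "K15_rotation_lists v = [
     [2, 13, 8, 10, 4, 14, 6, 3, 11, 9, 7, 12, 5],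
     [2, 9, 14, 4, 8, 12, 7, 10, 3, 5, 13, 11, 6],
     [0, 5, 7, 8, 4, 9, 1, 6, 12, 11, 14, 10, 13],
     [0, 6, 5, 1, 10, 9, 12, 8, 13, 14, 7, 4, 11],
     [0, 10, 12, 13, 6, 11, 3, 7, 9, 2, 8, 1, 14],
     [0, 12, 10, 14, 9, 13, 1, 3, 6, 8, 11, 7, 2],
     [0, 14, 12, 2, 1, 11, 4, 13, 9, 10, 8, 5, 3],
     [0, 9, 4, 3, 14, 8, 2, 5, 11, 13, 10, 1, 12],
     [0, 13, 3, 12, 1, 4, 2, 7, 14, 11, 5, 6, 10],
     [0, 11, 12, 3, 10, 6, 13, 5, 14, 1, 2, 4, 7],
     [0, 8, 6, 9, 3, 1, 7, 13, 2, 14, 5, 12, 4],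
     [0, 3, 4, 6, 1, 13, 7, 5, 8, 14, 2, 12, 9],
     [0, 7, 1, 8, 3, 9, 11, 2, 6, 14, 13, 4, 10, 5],
     [0, 2, 10, 7, 11, 1, 5, 9, 6, 4, 12, 14, 3, 8],
     [0, 4, 1, 9, 5, 10, 2, 11, 8, 7, 3, 13, 12, 6]] ! v"

definition K15_rot :: "nat \<Rightarrow> nat \<Rightarrow> nat" where
  "K15_rot v = cycle_of_list (K15_rotation_lists v)"

lemma K15_rotation_lists_cyclic_orders:
  "\<forall>v\<in>K15_V. distinct (K15_rotation_lists v) \<and>
     set (K15_rotation_lists v) = neighbours K15_V K15_minus_6K2 v"
  by code_simp

lemma K15_rotation_lists_triangles:
  "\<forall>v\<in>K15_V. \<forall>(u, w)\<in>cyclic_successions (K15_rotation_lists v).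
     (v, u) \<in> cyclic_successions (K15_rotation_lists w) \<and>
     (w, v) \<in> cyclic_successions (K15_rotation_lists u)"
  by code_simp

lemma K15_rotation_system: "rotation_system K15_V K15_minus_6K2 K15_rot"
  unfolding K15_rot_def using K15_rotation_lists_cyclic_orders
  by (intro rotation_system_of_cycles) blast

lemma K15_face_succ_cube:
  assumes "d \<in> darts K15_V K15_minus_6K2"
  shows "(face_succ K15_rot ^^ 3) d = d"
proof -
  let ?S = "\<lambda>v. cyclic_successions (K15_rotation_lists v)"
  have orders: "distinct (K15_rotation_lists v)"
      "set (K15_rotation_lists v) = neighbours K15_V K15_minus_6K2 v" if "v \<in> K15_V" for v
    using K15_rotation_lists_cyclic_orders that by auto
  have succ: "(x, y) \<in> ?S v \<longleftrightarrow> x \<in> neighbours K15_V K15_minus_6K2 v \<and> K15_rot v x = y"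
    if "v \<in> K15_V" for v x y
    using in_cyclic_successions_iff[OF orders(1)[OF that]] orders(2)[OF that]
    by (simp add: K15_rot_def)
  obtain u v where d: "d = (u, v)" "u \<in> K15_V" "v \<in> K15_V"
    "u \<in> neighbours K15_V K15_minus_6K2 v"
    using assms by (auto simp: darts_def neighbours_def K15_minus_6K2_def)
  define w where "w = K15_rot v u"
  have "(u, w) \<in> ?S v" using succ d(3,4) w_def by simp
  then have "(v, u) \<in> ?S w" "(w, v) \<in> ?S u"
    using K15_rotation_lists_triangles d(3) by auto
  moreover have "w \<in> K15_V"
    using \<open>(u, w) \<in> ?S v\<close> orders(2)[OF d(3)]
    by (auto simp: cyclic_successions_def neighbours_def dest: set_zip_rightD)
  ultimately have "K15_rot w v = u" "K15_rot u w = v" using succ d(2) by auto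
  then show ?thesis by (simp add: d face_succ_def numeral_3_eq_3 w_def[symmetric])
qed

lemma K15_simple_graph: "simple_graph K15_V K15_minus_6K2"
  by (auto simp: simple_graph_def K15_V_def K15_minus_6K2_def)

lemma K15_degrees:
  "\<forall>v\<in>K15_V. card (neighbours K15_V K15_minus_6K2 v) = (if v < 12 then 13 else 14)"
  by code_simp

lemma K15_num_edges: "num_edges K15_V K15_minus_6K2 = 99"
proof -
  have "2 * num_edges K15_V K15_minus_6K2
      = (\<Sum>v\<in>K15_V. card (neighbours K15_V K15_minus_6K2 v))"
    using card_darts_eq_sum_degrees card_darts_eq_twice_num_edges K15_simple_graph by metis
  also have "\<dots> = 198" by code_simp
  finally show ?thesis by simp
qed

theorem mainTheorem5:
  shows "(\<exists>rot. rotation_system K15_V K15_minus_6K2 rot \<and> triangular K15_V K15_minus_6K2 rot)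
         \<and> orientable_genus K15_V K15_minus_6K2 = 10"
proof -
  have no_leaf: "card (neighbours K15_V K15_minus_6K2 v) \<noteq> 1" if "v \<in> K15_V" for v
    using K15_degrees that by simp
  have triangular: "triangular K15_V K15_minus_6K2 K15_rot"
    using K15_simple_graph K15_rotation_system no_leaf K15_face_succ_cube
    by (rule triangular_if_face_succ_cube_id)
  then have "3 * card (faces K15_V K15_minus_6K2 K15_rot) = 198"
    using three_faces_eq_twice_edges_if_triangular[OF K15_simple_graph K15_rotation_system]
    by (simp add: K15_num_edges)
  then have "embedding_genus K15_V K15_minus_6K2 K15_rot = int 10"
    unfolding embedding_genus_def K15_num_edges by (simp add: K15_V_def)
  then have "orientable_genus K15_V K15_minus_6K2 = 10"
    using K15_simple_graph no_leaf K15_rotation_system triangular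
    by (rule orientable_genus_eq_if_triangular[rotated -1])
  then show ?thesis using K15_rotation_system triangular by blast
qed

end
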